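(* Let $|\psi\rangle\in\mathcal{H}'$ be a pure state and $\{(w_\mu,|\varphi_\mu\rangle)\}$ an ensemble of pure states of $\mathcal{H}'$ with probabilities $w_\mu\ge0$, $\sum_\mu w_\mu=1$, such that $$\sum_\mu w_\mu\,\mathcal{C}(|\varphi_\mu\rangle)\le\mathcal{C}(|\psi\rangle).$$ Then the transformation $|\psi\rangle\to\{(w_\mu,|\varphi_\mu\rangle)\}$ can be achieved by Z$_2$-invariant operations, i.e. there is a Z$_2$-invariant measurement $\{\mathcal{E}_\mu\}$ with $\mathcal{E}_\mu(|\psi\rangle\langle\psi|)=w_\mu|\varphi_\mu\rangle\langle\varphi_\mu|$ for every $\mu$.
   Context: $\mathcal{H}'$ is a two-dimensional Hilbert space with orthonormal basis $|0\rangle,|1\rangle$; $\pi=|0\rangle\langle0|-|1\rangle\langle1|$. A Z$_2$-invariant operation is a completely positive, trace-nonincreasing linear map $\mathcal{E}$ on operators on $\mathcal{H}'$ with $\mathcal{E}(\pi X\pi)=\pi\mathcal{E}(X)\pi$ for all $X$. A Z$_2$-invariant measurement is a (countable) family $\{\mathcal{E}_\mu\}$ of Z$_2$-invariant operations whose sum is trace-preserving. For a pure state $|\chi\rangle$, $\mathcal{C}(|\chi\rangle)=2\min\{|\langle0|\chi\rangle|^2,|\langle1|\chi\rangle|^2\}$. *)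

theory Defs
  imports "HOL-Analysis.Analysis"
begin

text \<open>The qubit space H' = C^2 with orthonormal basis indexed by bool:
  False stands for |0>, True stands for |1>.\<close>

type_synonym qvec = "bool \<Rightarrow> complex"
type_synonym qop = "bool \<Rightarrow> bool \<Rightarrow> complex"

definition qtrace :: "qop \<Rightarrow> complex" where
  "qtrace X = X False False + X True True"

definition normalized :: "qvec \<Rightarrow> bool" where
  "normalized v \<longleftrightarrow> (cmod (v False))^2 + (cmod (v True))^2 = 1"

definition proj :: "qvec \<Rightarrow> qop" where
  "proj v = (\<lambda>i j. v i * cnj (v j))"

text \<open>pi = |0><0| - |1><1|; sgn_pi gives its diagonal entries.\<close>
definition sgn_pi :: "bool \<Rightarrow> complex" where
  "sgn_pi i = (if i then -1 else 1)"

definition pi_conj :: "qop \<Rightarrow> qop" where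
  "pi_conj X = (\<lambda>i j. sgn_pi i * X i j * sgn_pi j)"

definition psd_on :: "'a set \<Rightarrow> ('a \<Rightarrow> 'a \<Rightarrow> complex) \<Rightarrow> bool" where
  "psd_on A M \<longleftrightarrow> (\<forall>v. let q = (\<Sum>a\<in>A. \<Sum>b\<in>A. cnj (v a) * M a b * v b)
                        in Im q = 0 \<and> Re q \<ge> 0)"

definition qlinear :: "(qop \<Rightarrow> qop) \<Rightarrow> bool" where
  "qlinear E \<longleftrightarrow> (\<forall>X Y. E (\<lambda>i j. X i j + Y i j) = (\<lambda>i j. E X i j + E Y i j))
               \<and> (\<forall>c X. E (\<lambda>i j. c * X i j) = (\<lambda>i j. c * E X i j))"

text \<open>Complete positivity: id_k (x) E is positive for every k, where operators on
  C^k (x) H' are matrices indexed by {..<k} \<times> bool and (id_k (x) E) acts blockwise.\<close>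
definition completely_positive :: "(qop \<Rightarrow> qop) \<Rightarrow> bool" where
  "completely_positive E \<longleftrightarrow>
     (\<forall>(k::nat) (M :: nat \<times> bool \<Rightarrow> nat \<times> bool \<Rightarrow> complex).
        psd_on ({..<k} \<times> UNIV) M \<longrightarrow>
        psd_on ({..<k} \<times> UNIV)
          (\<lambda>(a, x) (b, y). E (\<lambda>x' y'. M (a, x') (b, y')) x y))"

definition trace_nonincreasing :: "(qop \<Rightarrow> qop) \<Rightarrow> bool" where
  "trace_nonincreasing E \<longleftrightarrow> (\<forall>X. psd_on UNIV X \<longrightarrow> Re (qtrace (E X)) \<le> Re (qtrace X))"

definition Z2_operation :: "(qop \<Rightarrow> qop) \<Rightarrow> bool" where
  "Z2_operation E \<longleftrightarrow> qlinear E \<and> completely_positive E \<and> trace_nonincreasing E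
     \<and> (\<forall>X. E (pi_conj X) = pi_conj (E X))"

definition Z2_measurement :: "'i set \<Rightarrow> ('i \<Rightarrow> qop \<Rightarrow> qop) \<Rightarrow> bool" where
  "Z2_measurement I E \<longleftrightarrow> countable I \<and> (\<forall>\<mu>\<in>I. Z2_operation (E \<mu>))
     \<and> (\<forall>X. ((\<lambda>\<mu>. qtrace (E \<mu> X)) has_sum qtrace X) I)"

definition coh :: "qvec \<Rightarrow> real" where
  "coh v = 2 * min ((cmod (v False))^2) ((cmod (v True))^2)"

end

theory Submission
  imports Defs
begin

text \<open>A Kraus operator that commutes with \<open>\<pi>\<close> up to sign is diagonal or anti-diagonal, so outcome
  \<open>\<mu>\<close> is realised by a diagonal \<open>K\<^sub>\<mu>\<close> and an anti-diagonal \<open>L\<^sub>\<mu>\<close> with \<open>K\<^sub>\<mu>\<psi> = s\<^sub>\<mu>\<phi>\<^sub>\<mu>\<close>,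
  \<open>L\<^sub>\<mu>\<psi> = t\<^sub>\<mu>\<phi>\<^sub>\<mu>\<close> and \<open>s\<^sub>\<mu>\<^sup>2 + t\<^sub>\<mu>\<^sup>2 = w\<^sub>\<mu>\<close>. Completeness \<open>\<Sum> K*K + L*L = 1\<close> then only
  constrains the two populations: with \<open>p = |\<langle>0|\<psi>\<rangle>|\<^sup>2\<close>, \<open>q\<^sub>\<mu> = |\<langle>0|\<phi>\<^sub>\<mu>\<rangle>|\<^sup>2\<close> and
  \<open>x\<^sub>\<mu> = s\<^sub>\<mu>\<^sup>2 / w\<^sub>\<mu>\<close> one needs \<open>\<Sum> w\<^sub>\<mu> (x\<^sub>\<mu> q\<^sub>\<mu> + (1 - x\<^sub>\<mu>)(1 - q\<^sub>\<mu>)) = p\<close>.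
  Taking \<open>x\<^sub>\<mu> = 1 - \<theta>\<close> if \<open>q\<^sub>\<mu> \<le> 1/2\<close> and \<open>x\<^sub>\<mu> = \<theta>\<close> otherwise turns the left side into
  \<open>\<theta> + (1 - 2\<theta>) \<Sum> w\<^sub>\<mu> min q\<^sub>\<mu> (1 - q\<^sub>\<mu>)\<close>, and the coherence hypothesis
  \<open>\<Sum> w\<^sub>\<mu> min q\<^sub>\<mu> (1 - q\<^sub>\<mu>) \<le> min p (1 - p)\<close> is exactly what makes this solvable with
  \<open>\<theta> \<in> [0, 1]\<close>.\<close>

text \<open>\<open>X \<mapsto> K X K* + L X L*\<close> with \<open>K = diag k\<close> and the anti-diagonal \<open>L\<close> sending \<open>|\<not>i\<rangle>\<close> to
  \<open>l i |i\<rangle>\<close>.\<close>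
definition flip_kraus_op :: "qvec \<Rightarrow> qvec \<Rightarrow> qop \<Rightarrow> qop" where
  "flip_kraus_op k l X = (\<lambda>i j. k i * X i j * cnj (k j) + l i * X (\<not> i) (\<not> j) * cnj (l j))"

definition quad_form :: "'a set \<Rightarrow> ('a \<Rightarrow> 'a \<Rightarrow> complex) \<Rightarrow> ('a \<Rightarrow> complex) \<Rightarrow> complex" where
  "quad_form A M v = (\<Sum>a\<in>A. \<Sum>b\<in>A. cnj (v a) * M a b * v b)"

lemma psd_on_iff_quad_form:
  "psd_on A M \<longleftrightarrow> (\<forall>v. Im (quad_form A M v) = 0 \<and> Re (quad_form A M v) \<ge> 0)"
  unfolding psd_on_def quad_form_def Let_def by simp

lemma psd_on_add:
  assumes "psd_on A M" "psd_on A N"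
  shows "psd_on A (\<lambda>a b. M a b + N a b)"
  using assms unfolding psd_on_iff_quad_form quad_form_def
  by (simp add: distrib_left distrib_right sum.distrib)

lemma psd_on_monomial_congruence:
  fixes g :: "'b \<Rightarrow> 'b" and c :: "'b \<Rightarrow> complex" and M :: "'a \<times> 'b \<Rightarrow> 'a \<times> 'b \<Rightarrow> complex"
  assumes psd: "psd_on (A \<times> UNIV) M" and inv: "\<And>x. g (g x) = x"
  shows "psd_on (A \<times> UNIV) (\<lambda>(a, x) (b, y). c x * M (a, g x) (b, g y) * cnj (c y))"
  unfolding psd_on_iff_quad_form
proof
  fix v :: "'a \<times> 'b \<Rightarrow> complex"
  define h where "h = (\<lambda>(a :: 'a, x). (a, g x))"
  have reindex: "(\<Sum>p\<in>A \<times> UNIV. F p) = (\<Sum>p\<in>A \<times> UNIV. F (h p))" for F :: "_ \<Rightarrow> complex"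
    by (rule sum.reindex_bij_witness[of _ h h]) (auto simp: h_def inv)
  have "quad_form (A \<times> UNIV) (\<lambda>(a, x) (b, y). c x * M (a, g x) (b, g y) * cnj (c y)) v
      = quad_form (A \<times> UNIV) M (\<lambda>(a, z). cnj (c (g z)) * v (a, g z))"
    unfolding quad_form_def
    by (subst (1 2) reindex, rule sum.cong[OF refl])+ (auto simp: h_def inv)
  then show "Im (quad_form (A \<times> UNIV) (\<lambda>(a, x) (b, y). c x * M (a, g x) (b, g y) * cnj (c y)) v) = 0 \<and>
      0 \<le> Re (quad_form (A \<times> UNIV) (\<lambda>(a, x) (b, y). c x * M (a, g x) (b, g y) * cnj (c y)) v)"
    using psd unfolding psd_on_iff_quad_form by simp
qed

lemma completely_positive_flip_kraus_op: "completely_positive (flip_kraus_op k l)"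
  unfolding completely_positive_def
proof (intro allI impI)
  fix n :: nat and M :: "nat \<times> bool \<Rightarrow> nat \<times> bool \<Rightarrow> complex"
  assume psd: "psd_on ({..<n} \<times> UNIV) M"
  have "(\<lambda>(a, x) (b, y). flip_kraus_op k l (\<lambda>x' y'. M (a, x') (b, y')) x y)
     = (\<lambda>p q. (\<lambda>(a, x) (b, y). k x * M (a, id x) (b, id y) * cnj (k y)) p q
            + (\<lambda>(a, x) (b, y). l x * M (a, Not x) (b, Not y) * cnj (l y)) p q)"
    by (auto simp: flip_kraus_op_def fun_eq_iff)
  then show "psd_on ({..<n} \<times> UNIV) (\<lambda>(a, x) (b, y). flip_kraus_op k l (\<lambda>x' y'. M (a, x') (b, y')) x y)"
    by (simp only:) (intro psd_on_add psd_on_monomial_congruence[OF psd]; simp)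
qed

lemma qlinear_flip_kraus_op: "qlinear (flip_kraus_op k l)"
  unfolding qlinear_def flip_kraus_op_def by (auto simp: fun_eq_iff algebra_simps)

lemma flip_kraus_op_pi_conj: "flip_kraus_op k l (pi_conj X) = pi_conj (flip_kraus_op k l X)"
  unfolding flip_kraus_op_def pi_conj_def sgn_pi_def by (auto simp: fun_eq_iff algebra_simps)

lemma qtrace_flip_kraus_op:
  "qtrace (flip_kraus_op k l X) =
     (\<Sum>i\<in>UNIV. complex_of_real ((cmod (k i))\<^sup>2 + (cmod (l (\<not> i)))\<^sup>2) * X i i)"
proof -
  have norm_sq: "z * x * cnj z = complex_of_real ((cmod z)\<^sup>2) * x" for z x :: complex
    by (simp only: complex_norm_square mult_ac)
  show ?thesis
    unfolding qtrace_def flip_kraus_op_def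
    by (simp only: UNIV_bool sum.insert sum.empty finite.intros insert_iff empty_iff
        not_False_eq_True not_True_eq_False simp_thms norm_sq) (simp add: algebra_simps)
qed

lemma psd_on_diag_nonneg:
  fixes X :: qop
  assumes "psd_on UNIV X"
  shows "Im (X i i) = 0 \<and> Re (X i i) \<ge> 0"
proof -
  have "quad_form UNIV X (\<lambda>j. if j = i then 1 else 0) = X i i"
    unfolding quad_form_def by (cases i) (simp_all add: UNIV_bool)
  then show ?thesis
    using assms unfolding psd_on_iff_quad_form by metis
qed

lemma trace_nonincreasing_flip_kraus_op:
  assumes "\<And>i. (cmod (k i))\<^sup>2 + (cmod (l (\<not> i)))\<^sup>2 \<le> 1"
  shows "trace_nonincreasing (flip_kraus_op k l)"
  unfolding trace_nonincreasing_def
proof (intro allI impI)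
  fix X :: qop
  assume "psd_on UNIV X"
  then have "Re (X i i) \<ge> 0" for i
    by (simp add: psd_on_diag_nonneg)
  then have diag_le: "((cmod (k i))\<^sup>2 + (cmod (l (\<not> i)))\<^sup>2) * Re (X i i) \<le> Re (X i i)" for i
    using mult_right_mono[OF assms] by (metis mult_1)
  show "Re (qtrace (flip_kraus_op k l X)) \<le> Re (qtrace X)"
    using add_mono[OF diag_le[of False] diag_le[of True]] unfolding qtrace_flip_kraus_op by (simp add: qtrace_def UNIV_bool)
qed

lemma Z2_operation_flip_kraus_op:
  assumes "\<And>i. (cmod (k i))\<^sup>2 + (cmod (l (\<not> i)))\<^sup>2 \<le> 1"
  shows "Z2_operation (flip_kraus_op k l)"
  unfolding Z2_operation_def
  using qlinear_flip_kraus_op completely_positive_flip_kraus_op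
    trace_nonincreasing_flip_kraus_op[of k l, OF assms] flip_kraus_op_pi_conj by blast

lemma has_sum_nonneg_term_le:
  fixes f :: "'a \<Rightarrow> real"
  assumes "(f has_sum S) A" "\<And>x. x \<in> A \<Longrightarrow> f x \<ge> 0" "a \<in> A"
  shows "f a \<le> S"
  using has_sum_mono_neutral[OF has_sum_finite[of "{a}" f] assms(1)] assms(2,3) by auto

lemma Z2_measurement_flip_kraus_op:
  assumes "countable I"
    and "\<And>i. ((\<lambda>\<mu>. (cmod (k \<mu> i))\<^sup>2 + (cmod (l \<mu> (\<not> i)))\<^sup>2) has_sum 1) I"
  shows "Z2_measurement I (\<lambda>\<mu>. flip_kraus_op (k \<mu>) (l \<mu>))"
  unfolding Z2_measurement_def
proof (intro conjI ballI allI)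
  show "countable I" by fact
next
  fix \<mu> assume "\<mu> \<in> I"
  then show "Z2_operation (flip_kraus_op (k \<mu>) (l \<mu>))"
    by (intro Z2_operation_flip_kraus_op has_sum_nonneg_term_le[OF assms(2)]) auto
next
  fix X :: qop
  have "((\<lambda>\<mu>. complex_of_real ((cmod (k \<mu> i))\<^sup>2 + (cmod (l \<mu> (\<not> i)))\<^sup>2) * X i i)
          has_sum X i i) I" for i
    using has_sum_cmult_left[OF has_sum_of_real[OF assms(2)], where c = "X i i"] by simp
  from has_sum_add[OF this[of False] this[of True]]
  show "((\<lambda>\<mu>. qtrace (flip_kraus_op (k \<mu>) (l \<mu>) X)) has_sum qtrace X) I"
    unfolding qtrace_flip_kraus_op by (simp add: qtrace_def UNIV_bool)
qed

lemma flip_kraus_op_proj: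
  assumes "\<And>i. k i * \<psi> i = complex_of_real s * \<phi> i"
    and "\<And>i. l i * \<psi> (\<not> i) = complex_of_real t * \<phi> i"
  shows "flip_kraus_op k l (proj \<psi>) = (\<lambda>i j. complex_of_real (s\<^sup>2 + t\<^sup>2) * proj \<phi> i j)"
proof (intro ext)
  fix i j
  have "flip_kraus_op k l (proj \<psi>) i j
      = (k i * \<psi> i) * cnj (k j * \<psi> j) + (l i * \<psi> (\<not> i)) * cnj (l j * \<psi> (\<not> j))"
    by (simp add: flip_kraus_op_def proj_def algebra_simps)
  also have "\<dots> = complex_of_real (s\<^sup>2 + t\<^sup>2) * proj \<phi> i j"
    by (simp only: assms) (simp add: proj_def algebra_simps power2_eq_square)
  finally show "flip_kraus_op k l (proj \<psi>) i j = complex_of_real (s\<^sup>2 + t\<^sup>2) * proj \<phi> i j" .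
qed

lemma amplitude_factors_exist:
  fixes a b c :: complex and d :: real
  assumes "d \<ge> 0" and "d * (cmod a)\<^sup>2 = (cmod b)\<^sup>2 + (cmod c)\<^sup>2"
  shows "\<exists>x y. x * a = b \<and> y * a = c \<and> (cmod x)\<^sup>2 + (cmod y)\<^sup>2 = d"
proof (cases "a = 0")
  case True
  with assms(2) have "b = 0" "c = 0"
    by (simp_all add: add_nonneg_eq_0_iff)
  with True assms(1) show ?thesis
    by (intro exI[of _ "complex_of_real (sqrt d)"] exI[of _ 0]) simp
next
  case False
  with assms(2) show ?thesis
    by (intro exI[of _ "b / a"] exI[of _ "c / a"])
      (simp add: norm_divide add_divide_distrib[symmetric] field_simps)
qed

lemma flip_kraus_pair_exists:
  fixes \<psi> \<phi> :: qvec and s t :: real and D :: "bool \<Rightarrow> real"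
  assumes "\<And>i. D i \<ge> 0"
    and "\<And>i. D i * (cmod (\<psi> i))\<^sup>2 = s\<^sup>2 * (cmod (\<phi> i))\<^sup>2 + t\<^sup>2 * (cmod (\<phi> (\<not> i)))\<^sup>2"
  shows "\<exists>k l. flip_kraus_op k l (proj \<psi>) = (\<lambda>i j. complex_of_real (s\<^sup>2 + t\<^sup>2) * proj \<phi> i j)
           \<and> (\<forall>i. (cmod (k i))\<^sup>2 + (cmod (l (\<not> i)))\<^sup>2 = D i)"
proof -
  have "\<forall>i. \<exists>x y. x * \<psi> i = complex_of_real s * \<phi> i \<and> y * \<psi> i = complex_of_real t * \<phi> (\<not> i)
           \<and> (cmod x)\<^sup>2 + (cmod y)\<^sup>2 = D i"
    using amplitude_factors_exist assms by (simp add: norm_mult power_mult_distrib)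
  then obtain k l' where k: "\<And>i. k i * \<psi> i = complex_of_real s * \<phi> i"
    and l': "\<And>i. l' i * \<psi> i = complex_of_real t * \<phi> (\<not> i)"
    and D: "\<And>i. (cmod (k i))\<^sup>2 + (cmod (l' i))\<^sup>2 = D i"
    by metis
  have "l' (\<not> i) * \<psi> (\<not> i) = complex_of_real t * \<phi> i" for i
    using l'[of "\<not> i"] by simp
  with k have "flip_kraus_op k (\<lambda>i. l' (\<not> i)) (proj \<psi>)
      = (\<lambda>i j. complex_of_real (s\<^sup>2 + t\<^sup>2) * proj \<phi> i j)"
    by (rule flip_kraus_op_proj)
  moreover have "\<forall>i. (cmod (k i))\<^sup>2 + (cmod (l' (\<not> \<not> i)))\<^sup>2 = D i"
    using D by simp
  ultimately show ?thesis by blast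
qed

lemma population_weights_exist:
  fixes \<psi> :: qvec and g :: "bool \<Rightarrow> 'i \<Rightarrow> real"
  assumes "normalized \<psi>"
    and g_has_sum: "\<And>i. (g i has_sum (cmod (\<psi> i))\<^sup>2) I"
    and g_nonneg: "\<And>i \<mu>. g i \<mu> \<ge> 0"
  shows "\<exists>D. (\<forall>i. (D i has_sum 1) I) \<and> (\<forall>i \<mu>. D i \<mu> \<ge> 0)
             \<and> (\<forall>i. \<forall>\<mu>\<in>I. D i \<mu> * (cmod (\<psi> i))\<^sup>2 = g i \<mu>)"
proof -
  \<comment> \<open>Where \<open>\<psi> i = 0\<close> all \<open>g i \<mu>\<close> vanish and \<open>D i\<close> is unconstrained; the other
    component's weights keep the sum at 1.\<close>
  define D where "D i \<mu> = (if \<psi> i = 0 then g (\<not> i) \<mu> / (cmod (\<psi> (\<not> i)))\<^sup>2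
                                  else g i \<mu> / (cmod (\<psi> i))\<^sup>2)" for i \<mu>
  have "(D i has_sum 1) I" for i
  proof (cases "\<psi> i = 0")
    case True
    then have "\<psi> (\<not> i) \<noteq> 0"
      using \<open>normalized \<psi>\<close> by (cases i) (auto simp: normalized_def)
    with True show ?thesis
      using has_sum_divide_const[OF g_has_sum[of "\<not> i"], of "(cmod (\<psi> (\<not> i)))\<^sup>2"]
      by (simp add: D_def[abs_def])
  next
    case False
    then show ?thesis
      using has_sum_divide_const[OF g_has_sum[of i], of "(cmod (\<psi> i))\<^sup>2"]
      by (simp add: D_def[abs_def])
  qed
  moreover have "D i \<mu> \<ge> 0" for i \<mu>
    by (simp add: D_def g_nonneg)
  moreover have "D i \<mu> * (cmod (\<psi> i))\<^sup>2 = g i \<mu>" if "\<mu> \<in> I" for i \<mu>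
  proof (cases "\<psi> i = 0")
    case True
    then show ?thesis
      using nonneg_has_sum_le_0D[OF g_has_sum _ g_nonneg that] by simp
  qed (simp add: D_def)
  ultimately show ?thesis by blast
qed

lemma Z2_measurement_from_amplitudes:
  fixes \<psi> :: qvec and \<phi> :: "'i \<Rightarrow> qvec" and s t :: "'i \<Rightarrow> real"
  assumes "countable I" and "normalized \<psi>"
    and "\<And>i. ((\<lambda>\<mu>. (s \<mu>)\<^sup>2 * (cmod (\<phi> \<mu> i))\<^sup>2 + (t \<mu>)\<^sup>2 * (cmod (\<phi> \<mu> (\<not> i)))\<^sup>2)
                has_sum (cmod (\<psi> i))\<^sup>2) I"
  shows "\<exists>E. Z2_measurement I E \<and>
           (\<forall>\<mu>\<in>I. E \<mu> (proj \<psi>) = (\<lambda>i j. complex_of_real ((s \<mu>)\<^sup>2 + (t \<mu>)\<^sup>2) * proj (\<phi> \<mu>) i j))"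
proof -
  obtain D where D_has_sum: "\<And>i. (D i has_sum 1) I" and D_nonneg: "\<And>i \<mu>. D i \<mu> \<ge> 0"
    and D_eq: "\<And>i \<mu>. \<mu> \<in> I \<Longrightarrow> D i \<mu> * (cmod (\<psi> i))\<^sup>2
                 = (s \<mu>)\<^sup>2 * (cmod (\<phi> \<mu> i))\<^sup>2 + (t \<mu>)\<^sup>2 * (cmod (\<phi> \<mu> (\<not> i)))\<^sup>2"
    using population_weights_exist[OF assms(2,3)] by (metis zero_le_power2 add_nonneg_nonneg mult_nonneg_nonneg)
  have "\<forall>\<mu>\<in>I. \<exists>k l. flip_kraus_op k l (proj \<psi>)
                      = (\<lambda>i j. complex_of_real ((s \<mu>)\<^sup>2 + (t \<mu>)\<^sup>2) * proj (\<phi> \<mu>) i j)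
                    \<and> (\<forall>i. (cmod (k i))\<^sup>2 + (cmod (l (\<not> i)))\<^sup>2 = D i \<mu>)"
    using D_nonneg D_eq by (intro ballI flip_kraus_pair_exists)
  then obtain k l where kl: "\<And>\<mu>. \<mu> \<in> I \<Longrightarrow> flip_kraus_op (k \<mu>) (l \<mu>) (proj \<psi>)
                      = (\<lambda>i j. complex_of_real ((s \<mu>)\<^sup>2 + (t \<mu>)\<^sup>2) * proj (\<phi> \<mu>) i j)"
    and D: "\<And>\<mu> i. \<mu> \<in> I \<Longrightarrow> (cmod (k \<mu> i))\<^sup>2 + (cmod (l \<mu> (\<not> i)))\<^sup>2 = D i \<mu>"
    by metis
  have "Z2_measurement I (\<lambda>\<mu>. flip_kraus_op (k \<mu>) (l \<mu>))"
    using D_has_sum D by (intro Z2_measurement_flip_kraus_op \<open>countable I\<close>) (simp cong: has_sum_cong)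
  with kl show ?thesis by blast
qed

lemma mixing_parameter_exists:
  fixes p A :: real
  assumes "0 \<le> A" and "A \<le> min p (1 - p)"
  shows "\<exists>\<theta>. 0 \<le> \<theta> \<and> \<theta> \<le> 1 \<and> \<theta> + (1 - 2 * \<theta>) * A = p"
proof (cases "A = 1 / 2")
  case True
  with assms show ?thesis
    by (intro exI[of _ p]) auto
next
  case False
  define \<theta> where "\<theta> = (p - A) / (1 - 2 * A)"
  from False assms have "1 - 2 * A > 0" by simp
  then have "\<theta> * (1 - 2 * A) = p - A" and "0 \<le> \<theta> \<and> \<theta> \<le> 1"
    using assms by (auto simp: \<theta>_def field_simps)
  then show ?thesis
    by (intro exI[of _ \<theta>]) (auto simp: algebra_simps)
qed

lemma mixing_fractions_exist:
  fixes w q :: "'i \<Rightarrow> real" and p :: real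
  assumes "(w has_sum 1) I"
    and "\<And>\<mu>. \<mu> \<in> I \<Longrightarrow> w \<mu> \<ge> 0 \<and> 0 \<le> q \<mu> \<and> q \<mu> \<le> 1"
    and "(\<Sum>\<^sub>\<infinity>\<mu>\<in>I. w \<mu> * min (q \<mu>) (1 - q \<mu>)) \<le> min p (1 - p)"
  shows "\<exists>x. (\<forall>\<mu>. 0 \<le> x \<mu> \<and> x \<mu> \<le> 1) \<and>
           ((\<lambda>\<mu>. w \<mu> * (x \<mu> * q \<mu> + (1 - x \<mu>) * (1 - q \<mu>))) has_sum p) I"
proof -
  define m where "m \<mu> = w \<mu> * min (q \<mu>) (1 - q \<mu>)" for \<mu>
  have m_bounds: "0 \<le> m \<mu> \<and> m \<mu> \<le> w \<mu>" if "\<mu> \<in> I" for \<mu>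
    using assms(2)[OF that] unfolding m_def by (auto simp: mult_left_le)
  have "m summable_on I"
    using m_bounds by (intro summable_on_comparison_test[OF has_sum_imp_summable[OF assms(1)]]) auto
  then have m_has_sum: "(m has_sum (\<Sum>\<^sub>\<infinity>\<mu>\<in>I. m \<mu>)) I"
    by simp
  moreover have "(\<Sum>\<^sub>\<infinity>\<mu>\<in>I. m \<mu>) \<ge> 0"
    using m_bounds by (intro infsum_nonneg) auto
  ultimately obtain \<theta> where \<theta>: "0 \<le> \<theta>" "\<theta> \<le> 1" "\<theta> + (1 - 2 * \<theta>) * (\<Sum>\<^sub>\<infinity>\<mu>\<in>I. m \<mu>) = p"
    using mixing_parameter_exists assms(3) unfolding m_def by blast
  define x where "x \<mu> = (if q \<mu> \<le> 1 / 2 then 1 - \<theta> else \<theta>)" for \<mu>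
  have x_mixing: "(\<lambda>\<mu>. w \<mu> * (x \<mu> * q \<mu> + (1 - x \<mu>) * (1 - q \<mu>)))
      = (\<lambda>\<mu>. \<theta> * w \<mu> + (1 - 2 * \<theta>) * m \<mu>)"
    unfolding x_def m_def by (auto simp: fun_eq_iff min_def algebra_simps)
  have "((\<lambda>\<mu>. w \<mu> * (x \<mu> * q \<mu> + (1 - x \<mu>) * (1 - q \<mu>))) has_sum p) I"
    unfolding x_mixing using has_sum_add[OF has_sum_cmult_right[OF assms(1), where c = \<theta>]
        has_sum_cmult_right[OF m_has_sum, where c = "1 - 2 * \<theta>"]]
    unfolding mult_1_right \<theta>(3) .
  moreover have "0 \<le> x \<mu> \<and> x \<mu> \<le> 1" for \<mu>
    using \<theta> by (simp add: x_def)
  ultimately show ?thesis by blast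
qed

lemma Z2_measurement_from_mixing_fractions:
  fixes \<psi> :: qvec and \<phi> :: "'i \<Rightarrow> qvec" and w x :: "'i \<Rightarrow> real"
  assumes "countable I" and "normalized \<psi>"
    and norm_\<phi>: "\<And>\<mu>. \<mu> \<in> I \<Longrightarrow> normalized (\<phi> \<mu>)"
    and w: "\<And>\<mu>. \<mu> \<in> I \<Longrightarrow> w \<mu> \<ge> 0" and "(w has_sum 1) I"
    and x: "\<And>\<mu>. 0 \<le> x \<mu> \<and> x \<mu> \<le> 1"
    and x_has_sum: "((\<lambda>\<mu>. w \<mu> * (x \<mu> * (cmod (\<phi> \<mu> False))\<^sup>2 + (1 - x \<mu>) * (cmod (\<phi> \<mu> True))\<^sup>2))
                     has_sum (cmod (\<psi> False))\<^sup>2) I"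
  shows "\<exists>E. Z2_measurement I E \<and>
           (\<forall>\<mu>\<in>I. E \<mu> (proj \<psi>) = (\<lambda>i j. complex_of_real (w \<mu>) * proj (\<phi> \<mu>) i j))"
proof -
  define s where "s \<mu> = sqrt (w \<mu> * x \<mu>)" for \<mu>
  define t where "t \<mu> = sqrt (w \<mu> * (1 - x \<mu>))" for \<mu>
  have s_sq: "(s \<mu>)\<^sup>2 = w \<mu> * x \<mu>" and t_sq: "(t \<mu>)\<^sup>2 = w \<mu> * (1 - x \<mu>)"
    if "\<mu> \<in> I" for \<mu>
    using w[OF that] x[of \<mu>] by (simp_all add: s_def t_def)
  have weight_True: "(s \<mu>)\<^sup>2 * (cmod (\<phi> \<mu> True))\<^sup>2 + (t \<mu>)\<^sup>2 * (cmod (\<phi> \<mu> False))\<^sup>2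
      = w \<mu> + - 1 * (w \<mu> * (x \<mu> * (cmod (\<phi> \<mu> False))\<^sup>2 + (1 - x \<mu>) * (cmod (\<phi> \<mu> True))\<^sup>2))"
    if "\<mu> \<in> I" for \<mu>
    using norm_\<phi>[OF that] unfolding s_sq[OF that] t_sq[OF that] normalized_def
    by (simp add: algebra_simps) (metis distrib_left mult_1_right)
  have \<psi>_True: "(cmod (\<psi> True))\<^sup>2 = 1 + - 1 * (cmod (\<psi> False))\<^sup>2"
    using \<open>normalized \<psi>\<close> by (simp add: normalized_def)
  have "((\<lambda>\<mu>. (s \<mu>)\<^sup>2 * (cmod (\<phi> \<mu> i))\<^sup>2 + (t \<mu>)\<^sup>2 * (cmod (\<phi> \<mu> (\<not> i)))\<^sup>2)
          has_sum (cmod (\<psi> i))\<^sup>2) I" for i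
  proof (induct i)
    case False
    show ?case
      using x_has_sum by (simp add: s_sq t_sq algebra_simps cong: has_sum_cong)
  next
    case True
    show ?case
      unfolding \<psi>_True using has_sum_cong[THEN iffD2, OF weight_True
          has_sum_add[OF assms(5) has_sum_cmult_right[OF x_has_sum, where c = "-1"]]]
      by simp
  qed
  then have "\<exists>E. Z2_measurement I E \<and>
           (\<forall>\<mu>\<in>I. E \<mu> (proj \<psi>) = (\<lambda>i j. complex_of_real ((s \<mu>)\<^sup>2 + (t \<mu>)\<^sup>2) * proj (\<phi> \<mu>) i j))"
    by (rule Z2_measurement_from_amplitudes[OF assms(1,2)])
  moreover have "(s \<mu>)\<^sup>2 + (t \<mu>)\<^sup>2 = w \<mu>" if "\<mu> \<in> I" for \<mu>
    by (simp add: s_sq[OF that] t_sq[OF that] algebra_simps)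
  ultimately show ?thesis by auto
qed

lemma coh_normalized:
  assumes "normalized v"
  shows "coh v = 2 * min ((cmod (v False))\<^sup>2) (1 - (cmod (v False))\<^sup>2)"
  using assms unfolding coh_def normalized_def by (simp add: algebra_simps)

theorem theorem13:
  fixes \<psi> :: qvec and I :: "'i set" and w :: "'i \<Rightarrow> real" and \<phi> :: "'i \<Rightarrow> qvec"
  assumes "normalized \<psi>"
    and "countable I"
    and "\<forall>\<mu>\<in>I. w \<mu> \<ge> 0 \<and> normalized (\<phi> \<mu>)"
    and "(w has_sum 1) I"
    and "(\<Sum>\<^sub>\<infinity>\<mu>\<in>I. w \<mu> * coh (\<phi> \<mu>)) \<le> coh \<psi>"
  shows "\<exists>E. Z2_measurement I E \<and>
           (\<forall>\<mu>\<in>I. E \<mu> (proj \<psi>) = (\<lambda>i j. complex_of_real (w \<mu>) * proj (\<phi> \<mu>) i j))"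
proof -
  define q where "q \<mu> = (cmod (\<phi> \<mu> False))\<^sup>2" for \<mu>
  have q_True: "(cmod (\<phi> \<mu> True))\<^sup>2 = 1 - q \<mu>" if "\<mu> \<in> I" for \<mu>
    using assms(3) that unfolding normalized_def q_def by force
  have "(\<Sum>\<^sub>\<infinity>\<mu>\<in>I. w \<mu> * coh (\<phi> \<mu>)) = 2 * (\<Sum>\<^sub>\<infinity>\<mu>\<in>I. w \<mu> * min (q \<mu>) (1 - q \<mu>))"
    using assms(3) by (subst infsum_cmult_right'[symmetric], intro infsum_cong) (simp add: coh_normalized q_def)
  then have "(\<Sum>\<^sub>\<infinity>\<mu>\<in>I. w \<mu> * min (q \<mu>) (1 - q \<mu>)) \<le> min ((cmod (\<psi> False))\<^sup>2) (1 - (cmod (\<psi> False))\<^sup>2)"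
    using assms(5) by (simp add: coh_normalized[OF assms(1)])
  moreover have "w \<mu> \<ge> 0 \<and> 0 \<le> q \<mu> \<and> q \<mu> \<le> 1" if "\<mu> \<in> I" for \<mu>
    using assms(3) that q_True[OF that] unfolding q_def by (metis diff_ge_0_iff_ge zero_le_power2)
  ultimately obtain x where "\<And>\<mu>. 0 \<le> x \<mu> \<and> x \<mu> \<le> 1"
    and "((\<lambda>\<mu>. w \<mu> * (x \<mu> * q \<mu> + (1 - x \<mu>) * (1 - q \<mu>))) has_sum (cmod (\<psi> False))\<^sup>2) I"
    using mixing_fractions_exist[OF assms(4)] by blast
  with assms show ?thesis
    by (intro Z2_measurement_from_mixing_fractions) (auto simp: q_def q_True cong: has_sum_cong)
qed

end
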